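(* Let $S(t)$ be an inverse subordinator, $T>0$, $Z_0>0$, $r\ge0$, $\sigma>0$, and let $f:[0,\infty)\to[0,\infty)$ be a continuous payoff function for which there is $c>0$ with $f(x)\le c|x|$ for all $x$. For $\tau>0$ and $n\in\mathbb N$ let $u_n=e^{\sigma\sqrt{\tau/n}}$, $d_n=1/u_n$, $R_n=e^{r\tau/n}$, $q_n=(R_n-d_n)/(u_n-d_n)$, and define the binomial (CRR) price $$V_n(\tau)=\frac{1}{R_n^{\,n}}\sum_{j=0}^n\binom{n}{j}q_n^j(1-q_n)^{n-j}f\big(Z_0u_n^jd_n^{\,n-j}\big).$$ Define the subordinated binomial price $C^{bin}_S(T)=\mathbb{E}\,V_n(S(T))$ and the subordinated Black–Scholes price $C_S(T)=\mathbb{E}\,V(S(T))$, where $V(\tau)=e^{-r\tau}\,\mathbb{E}\,f\big(Z_0\exp((r-\sigma^2/2)\tau+\sigma\sqrt\tau N)\big)$ with $N\sim\mathcal N(0,1)$ is the classical Black–Scholes price of the European option with payoff $f$ and maturity $\tau$. Then $$\lim_{n\to\infty}C^{bin}_S(T)=C_S(T).$$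
   Context: Inverse subordinator: let $\nu$ be a Lévy measure on $(0,\infty)$ with $\int_0^\infty \min(1,x)\,\nu(dx)<\infty$ and $\nu(0,\infty)=\infty$, $\psi(u)=\int_0^\infty(1-e^{-ux})\,\nu(dx)$, $U_\psi$ the subordinator with $\mathbb{E}e^{-uU_\psi(t)}=e^{-t\psi(u)}$, and $S(t)=\inf\{\tau>0:U_\psi(\tau)>t\}$. In the expectations $\mathbb{E}\,V_n(S(T))$ and $\mathbb{E}\,V(S(T))$ the tree parameters are evaluated at the random time $\tau=S(T)$ (the binomial tree is run over a randomized time horizon). $C_S(T)$ is the fair price of the European option with payoff $f$ in the subordinated Black–Scholes model with underlying $Z_0\exp(\mu S(t)+\sigma B(S(t)))$. *)

theory Defs
  imports "HOL-Probability.Probability"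
begin

text \<open>Levy measure on (0,infinity), represented as a measure on the Borel reals
  carrying no mass on the non-positive half-line.\<close>
definition levy_measure :: "real measure \<Rightarrow> bool" where
  "levy_measure \<nu> \<longleftrightarrow> sets \<nu> = sets borel \<and> emeasure \<nu> {..0} = 0
     \<and> (\<integral>\<^sup>+ x. ennreal (min 1 x) \<partial>\<nu>) < \<infinity>
     \<and> emeasure \<nu> {0<..} = \<infinity>"

definition laplace_exponent :: "real measure \<Rightarrow> real \<Rightarrow> real" where
  "laplace_exponent \<nu> u = (\<integral> x. (1 - exp (- u * x)) \<partial>\<nu>)"

text \<open>U is a subordinator on the probability space M with Laplace exponent psi:
  a Levy process (U 0 = 0, independent and stationary increments, right-continuous
  non-decreasing paths (left limits then exist automatically)) with E exp(-u U(t)) = exp(-t psi(u)).\<close>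
definition subordinator ::
  "'a measure \<Rightarrow> (real \<Rightarrow> 'a \<Rightarrow> real) \<Rightarrow> (real \<Rightarrow> real) \<Rightarrow> bool" where
  "subordinator M U \<psi> \<longleftrightarrow>
     prob_space M
   \<and> (\<forall>t\<ge>0. U t \<in> borel_measurable M)
   \<and> (\<forall>\<omega>\<in>space M. U 0 \<omega> = 0
        \<and> mono_on {0..} (\<lambda>t. U t \<omega>)
        \<and> (\<forall>t\<ge>0. continuous (at_right t) (\<lambda>s. U s \<omega>)))
   \<and> (\<forall>(n::nat) (ts::nat \<Rightarrow> real). 0 \<le> ts 0 \<and> (\<forall>i<n. ts i < ts (Suc i)) \<longrightarrow>
        prob_space.indep_vars M (\<lambda>_. borel) (\<lambda>i \<omega>. U (ts (Suc i)) \<omega> - U (ts i) \<omega>) {..<n})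
   \<and> (\<forall>s\<ge>0. \<forall>t\<ge>0. distr M borel (\<lambda>\<omega>. U (s + t) \<omega> - U s \<omega>) = distr M borel (U t))
   \<and> (\<forall>t\<ge>0. \<forall>u\<ge>0. prob_space.expectation M (\<lambda>\<omega>. exp (- u * U t \<omega>)) = exp (- t * \<psi> u))"

definition inverse_subordinator :: "(real \<Rightarrow> 'a \<Rightarrow> real) \<Rightarrow> real \<Rightarrow> 'a \<Rightarrow> real" where
  "inverse_subordinator U t \<omega> = Inf {\<tau>. \<tau> > 0 \<and> U \<tau> \<omega> > t}"

definition crr_price ::
  "real \<Rightarrow> real \<Rightarrow> real \<Rightarrow> (real \<Rightarrow> real) \<Rightarrow> nat \<Rightarrow> real \<Rightarrow> real" where
  "crr_price r \<sigma> Z0 f n \<tau> =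
     (let u = exp (\<sigma> * sqrt (\<tau> / real n)); d = 1 / u; R = exp (r * \<tau> / real n);
          q = (R - d) / (u - d)
      in (1 / R ^ n) * (\<Sum>j=0..n. real (n choose j) * q ^ j * (1 - q) ^ (n - j)
                                   * f (Z0 * u ^ j * d ^ (n - j))))"

definition bs_price ::
  "real \<Rightarrow> real \<Rightarrow> real \<Rightarrow> (real \<Rightarrow> real) \<Rightarrow> real \<Rightarrow> real" where
  "bs_price r \<sigma> Z0 f \<tau> =
     exp (- r * \<tau>) * (\<integral> x. f (Z0 * exp ((r - \<sigma>\<^sup>2 / 2) * \<tau> + \<sigma> * sqrt \<tau> * x))
                           \<partial>std_normal_distribution)"

end

theory Submission
  imports Defs "HOL-Real_Asymp.Real_Asymp"
begin

text \<open>
  For a fixed horizon tau > 0 the CRR price equals exp(-r tau) E f(Z0 exp X_n), where the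
  log-price X_n of the tree is an affine image of a binomial variable. Its characteristic
  function is (1 + z_n / n)^n with z_n convergent, so by Levy's continuity theorem X_n
  converges weakly to the Gaussian log-price of the Black-Scholes model. In the log-price x
  the payoff is at most c Z0 exp x, and E exp(2 X_n) stays bounded; this gives uniform
  integrability and hence V_n(tau) -> V(tau).

  Moreover |V_n(tau)| <= c Z0 exp(a tau) with a = r^3 / sigma^4, uniformly in n. The inverse
  subordinator has exponential moments of every order: S(T) > k forces U(k) <= T, which has
  probability at most exp(u T - k psi(u)) by the Chernoff bound, and psi is unbounded because
  the Levy measure has infinite mass. Dominated convergence finishes the proof.
\<close>

section \<open>Limits and truncated integrals\<close>

lemma norm_Ln_one_plus_minus_le:
  fixes z :: complex
  assumes "norm z \<le> 1/2"
  shows "norm (Ln (1 + z) - z) \<le> 2 * norm z ^ 2"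
proof -
  have "norm (Ln (1 + z) - z) \<le> norm z ^ 2 / (1 - norm z)"
    using assms by (intro Ln_approx_linear) auto
  also have "\<dots> \<le> norm z ^ 2 / (1/2)"
    using assms by (intro divide_left_mono) auto
  finally show ?thesis by simp
qed

lemma tendsto_of_nat_mult_Ln_one_plus_div:
  fixes z :: "nat \<Rightarrow> complex"
  assumes lim: "z \<longlonglongrightarrow> w"
  shows "(\<lambda>n. of_nat n * Ln (1 + z n / of_nat n)) \<longlonglongrightarrow> w"
proof -
  obtain B where B: "\<And>n. norm (z n) \<le> B" "B > 0"
    using convergent_imp_Bseq[of z] lim by (auto simp: Bseq_def convergent_def)
  have "\<forall>\<^sub>F n in sequentially. real n \<ge> 2 * B" by real_asymp
  then have "\<forall>\<^sub>F n in sequentially. norm (of_nat n * Ln (1 + z n / of_nat n) - z n) \<le> 2 * B\<^sup>2 / real n"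
  proof eventually_elim
    case (elim n)
    then have "n > 0" using B(2) by (auto intro: ccontr)
    then have small: "norm (z n / of_nat n) \<le> 1/2" using B(1)[of n] elim by (simp add: norm_divide field_simps)
    have "of_nat n * Ln (1 + z n / of_nat n) - z n = of_nat n * (Ln (1 + z n / of_nat n) - z n / of_nat n)"
      using \<open>n > 0\<close> by (simp add: field_simps)
    then have "norm (of_nat n * Ln (1 + z n / of_nat n) - z n) \<le> real n * (2 * norm (z n / of_nat n) ^ 2)"
      using norm_Ln_one_plus_minus_le[OF small] by (simp add: norm_mult mult_left_mono)
    also have "\<dots> = 2 * norm (z n) ^ 2 / real n"
      using \<open>n > 0\<close> by (simp add: norm_divide power2_eq_square)
    also have "\<dots> \<le> 2 * B\<^sup>2 / real n"
      using B norm_ge_zero[of "z n"] by (intro divide_right_mono mult_left_mono power_mono) auto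
    finally show ?case .
  qed
  moreover have "(\<lambda>n. 2 * B\<^sup>2 / real n) \<longlonglongrightarrow> 0" by real_asymp
  ultimately have "(\<lambda>n. of_nat n * Ln (1 + z n / of_nat n) - z n) \<longlonglongrightarrow> 0"
    by (rule Lim_null_comparison)
  from tendsto_add[OF this lim] show ?thesis by simp
qed

lemma tendsto_one_plus_div_power_exp:
  fixes z :: "nat \<Rightarrow> complex"
  assumes lim: "z \<longlonglongrightarrow> w"
  shows "(\<lambda>n. (1 + z n / of_nat n) ^ n) \<longlonglongrightarrow> exp w"
proof -
  have "(\<lambda>n. z n * (1 / of_nat n)) \<longlonglongrightarrow> w * 0"
    by (intro tendsto_mult lim lim_1_over_n)
  then have "\<forall>\<^sub>F n in sequentially. norm (z n / of_nat n) < 1"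
    by (intro order_tendstoD(2)[OF tendsto_norm]) auto
  then have "\<forall>\<^sub>F n in sequentially. exp (of_nat n * Ln (1 + z n / of_nat n)) = (1 + z n / of_nat n) ^ n"
  proof eventually_elim
    case (elim n)
    have "1 + z n / of_nat n \<noteq> 0"
    proof
      assume "1 + z n / of_nat n = 0"
      then have "z n / of_nat n = -1" by (simp add: add_eq_0_iff)
      with elim show False by simp
    qed
    then show ?case by (simp add: exp_of_nat_mult)
  qed
  with tendsto_exp[OF tendsto_of_nat_mult_Ln_one_plus_div[OF lim]] show ?thesis
    by (rule Lim_transform_eventually)
qed

lemma tendsto_mult_at_sqrt_time_step:
  fixes g :: "real \<Rightarrow> real"
  assumes lim: "((\<lambda>s. g s / s\<^sup>2) \<longlongrightarrow> L) (at_right 0)" and "\<tau> > 0"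
  shows "(\<lambda>n. real n * g (sqrt (\<tau> / real n))) \<longlonglongrightarrow> \<tau> * L"
proof -
  have "filterlim (\<lambda>n. sqrt (\<tau> / real n)) (at_right 0) sequentially"
    using \<open>\<tau> > 0\<close> by real_asymp
  from tendsto_mult_left[OF filterlim_compose[OF lim this], of \<tau>]
  have "(\<lambda>n. \<tau> * (g (sqrt (\<tau> / real n)) / (sqrt (\<tau> / real n))\<^sup>2)) \<longlonglongrightarrow> \<tau> * L" .
  moreover have "\<forall>\<^sub>F n in sequentially. \<tau> * (g (sqrt (\<tau> / real n)) / (sqrt (\<tau> / real n))\<^sup>2)
      = real n * g (sqrt (\<tau> / real n))"
    using eventually_gt_at_top[of 0] by eventually_elim (use \<open>\<tau> > 0\<close> in simp)
  ultimately show ?thesis by (rule Lim_transform_eventually)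
qed

lemma LIMSEQ_of_uniform_approximations:
  fixes x :: "nat \<Rightarrow> real" and y :: "nat \<Rightarrow> nat \<Rightarrow> real"
  assumes y: "\<And>m. y m \<longlonglongrightarrow> b m" and b: "b \<longlonglongrightarrow> L" and e: "e \<longlonglongrightarrow> 0"
    and close: "\<And>m. \<forall>\<^sub>F n in sequentially. \<bar>x n - y m n\<bar> \<le> e m"
  shows "x \<longlonglongrightarrow> L"
proof (rule tendstoI)
  fix \<epsilon> :: real assume "\<epsilon> > 0"
  define \<delta> where "\<delta> = \<epsilon> / 3"
  have "\<delta> > 0" using \<open>\<epsilon> > 0\<close> by (simp add: \<delta>_def)
  have "\<forall>\<^sub>F m in sequentially. dist (b m) L < \<delta> \<and> e m < \<delta>"
    using tendstoD[OF b \<open>\<delta> > 0\<close>] order_tendstoD(2)[OF e \<open>\<delta> > 0\<close>] by (rule eventually_conj)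
  then obtain m where m: "dist (b m) L < \<delta>" "e m < \<delta>"
    using eventually_happens'[OF sequentially_bot] by blast
  show "\<forall>\<^sub>F n in sequentially. dist (x n) L < \<epsilon>"
    using tendstoD[OF y \<open>\<delta> > 0\<close>, of m] close[of m]
  proof eventually_elim
    case (elim n)
    then show ?case using m unfolding \<delta>_def dist_real_def by linarith
  qed
qed

lemma min_truncation_error_le:
  fixes A m :: real
  assumes "0 \<le> A" "m > 0"
  shows "A - min A m \<le> A\<^sup>2 / m"
proof (cases "A \<le> m")
  case False
  then have "A \<le> A * (A / m)" using assms by (simp add: field_simps mult_right_mono)
  then show ?thesis using False assms by (simp add: power2_eq_square min_def)
qed (use assms in simp)

lemma integral_min_truncation_error_le:
  fixes F :: "'a \<Rightarrow> real"
  assumes F: "integrable M F" and F2: "integrable M (\<lambda>x. (F x)\<^sup>2)"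
    and nonneg: "\<And>x. 0 \<le> F x" and "m > 0"
  shows "0 \<le> (\<integral>x. F x \<partial>M) - (\<integral>x. min (F x) m \<partial>M)"
    and "(\<integral>x. F x \<partial>M) - (\<integral>x. min (F x) m \<partial>M) \<le> (\<integral>x. (F x)\<^sup>2 \<partial>M) / m"
proof -
  have [measurable]: "F \<in> borel_measurable M" using F by auto
  have Fm: "integrable M (\<lambda>x. min (F x) m)"
    using nonneg \<open>m > 0\<close> by (intro Bochner_Integration.integrable_bound[OF F]) auto
  have "(\<integral>x. F x \<partial>M) - (\<integral>x. min (F x) m \<partial>M) = (\<integral>x. F x - min (F x) m \<partial>M)"
    using F Fm by simp
  moreover have "0 \<le> (\<integral>x. F x - min (F x) m \<partial>M)"
    by (intro integral_nonneg_AE) simp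
  moreover have "(\<integral>x. F x - min (F x) m \<partial>M) \<le> (\<integral>x. (F x)\<^sup>2 / m \<partial>M)"
    using F Fm F2 nonneg \<open>m > 0\<close> by (intro integral_mono min_truncation_error_le) auto
  ultimately show "0 \<le> (\<integral>x. F x \<partial>M) - (\<integral>x. min (F x) m \<partial>M)"
    and "(\<integral>x. F x \<partial>M) - (\<integral>x. min (F x) m \<partial>M) \<le> (\<integral>x. (F x)\<^sup>2 \<partial>M) / m"
    by simp_all
qed

lemma tendsto_integral_min_truncation:
  fixes F :: "'a \<Rightarrow> real"
  assumes "finite_measure M" and [measurable]: "F \<in> borel_measurable M"
    and nonneg: "\<And>x. 0 \<le> F x" and bound: "\<And>m. (\<integral>x. min (F x) (real m) \<partial>M) \<le> B"
  shows "integrable M F" and "(\<lambda>m. \<integral>x. min (F x) (real m) \<partial>M) \<longlonglongrightarrow> (\<integral>x. F x \<partial>M)"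
proof -
  interpret finite_measure M by fact
  have int: "integrable M (\<lambda>x. min (F x) (real m))" for m
    using nonneg by (intro integrable_const_bound[where B="real m"]) simp_all
  have inc: "incseq (\<lambda>m. \<integral>x. min (F x) (real m) \<partial>M)"
    unfolding incseq_def by (intro allI impI integral_mono int) auto
  obtain L where L: "(\<lambda>m. \<integral>x. min (F x) (real m) \<partial>M) \<longlonglongrightarrow> L"
    using incseq_convergent[OF inc] bound by metis
  have pointwise: "(\<lambda>m. min (F x) (real m)) \<longlonglongrightarrow> F x" for x
  proof (rule tendsto_eventually)
    show "\<forall>\<^sub>F m in sequentially. min (F x) (real m) = F x"
      using filterlim_real_sequentially[unfolded filterlim_at_top, rule_format, of "F x"]
      by eventually_elim simp
  qed
  have mono: "AE x in M. mono (\<lambda>m. min (F x) (real m))"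
    by (auto simp: mono_def intro: min.mono)
  have "AE x in M. (\<lambda>m. min (F x) (real m)) \<longlonglongrightarrow> F x"
    using pointwise by simp
  from integrable_monotone_convergence[OF int mono this L] integral_monotone_convergence[OF int mono this L]
  show "integrable M F" "(\<lambda>m. \<integral>x. min (F x) (real m) \<partial>M) \<longlonglongrightarrow> (\<integral>x. F x \<partial>M)"
    using L by simp_all
qed

lemma (in prob_space) integrable_integral_le_of_square:
  fixes F :: "'a \<Rightarrow> real"
  assumes "F \<in> borel_measurable M" and F2: "integrable M (\<lambda>x. (F x)\<^sup>2)"
  shows "integrable M F" and "(\<integral>x. F x \<partial>M) \<le> 1 + (\<integral>x. (F x)\<^sup>2 \<partial>M)"
proof -
  have le: "\<bar>F x\<bar> \<le> 1 + (F x)\<^sup>2" for x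
  proof (cases "\<bar>F x\<bar> \<le> 1")
    case False
    then have "\<bar>F x\<bar> * 1 \<le> \<bar>F x\<bar> * \<bar>F x\<bar>" by (intro mult_left_mono) auto
    then show ?thesis by (simp add: power2_eq_square)
  qed (simp add: add_increasing2)
  have int: "integrable M (\<lambda>x. 1 + (F x)\<^sup>2)"
    using F2 by simp
  show "integrable M F"
    using le assms by (intro Bochner_Integration.integrable_bound[OF int]) auto
  then have "(\<integral>x. F x \<partial>M) \<le> (\<integral>x. 1 + (F x)\<^sup>2 \<partial>M)"
    using le by (intro integral_mono int) (auto simp: abs_le_iff)
  also have "\<dots> = 1 + (\<integral>x. (F x)\<^sup>2 \<partial>M)"
    using F2 by (simp add: prob_space)
  finally show "(\<integral>x. F x \<partial>M) \<le> 1 + (\<integral>x. (F x)\<^sup>2 \<partial>M)" .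
qed

lemma weak_conv_integral_tendsto_of_bounded_second_moment:
  fixes \<mu> :: "nat \<Rightarrow> real measure" and F :: "real \<Rightarrow> real"
  assumes \<mu>: "\<And>n. real_distribution (\<mu> n)" and \<nu>: "real_distribution \<nu>"
    and conv: "weak_conv_m \<mu> \<nu>"
    and cont: "\<And>x. isCont F x" and nonneg: "\<And>x. 0 \<le> F x"
    and F2_int: "\<And>n. integrable (\<mu> n) (\<lambda>x. (F x)\<^sup>2)"
    and F2_bound: "\<forall>\<^sub>F n in sequentially. (\<integral>x. (F x)\<^sup>2 \<partial>\<mu> n) \<le> K"
  shows "(\<lambda>n. \<integral>x. F x \<partial>\<mu> n) \<longlonglongrightarrow> (\<integral>x. F x \<partial>\<nu>)"
proof -
  interpret \<nu>: real_distribution \<nu> by (rule \<nu>)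
  have [measurable]: "F \<in> borel_measurable borel"
    using cont by (intro borel_measurable_continuous_onI continuous_at_imp_continuous_on) auto
  have F_int: "integrable (\<mu> n) F" and F_le: "(\<integral>x. F x \<partial>\<mu> n) \<le> 1 + (\<integral>x. (F x)\<^sup>2 \<partial>\<mu> n)" for n
  proof -
    interpret real_distribution "\<mu> n" by (rule \<mu>)
    have "F \<in> borel_measurable (\<mu> n)" by simp
    from integrable_integral_le_of_square[OF this F2_int]
    show "integrable (\<mu> n) F" "(\<integral>x. F x \<partial>\<mu> n) \<le> 1 + (\<integral>x. (F x)\<^sup>2 \<partial>\<mu> n)" .
  qed
  have truncated_int: "integrable (\<mu> n) (\<lambda>x. min (F x) (real m))" for n m
    using nonneg F_int[of n]
    by (intro Bochner_Integration.integrable_bound[OF F_int]) (auto intro!: borel_measurable_min)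
  have truncated_cont: "isCont (\<lambda>x. min (F x) (real m)) x" for m x
    by (intro continuous_intros cont)
  have truncated_bound: "norm (min (F x) (real m)) \<le> real m" for m x
    using nonneg[of x] by simp
  note truncated_conv = weak_conv_imp_integral_bdd_continuous_conv[OF \<mu> \<nu> conv truncated_cont truncated_bound]
  have "(\<integral>x. min (F x) (real m) \<partial>\<nu>) \<le> 1 + K" for m
  proof (rule LIMSEQ_le_const2[OF truncated_conv])
    have "\<forall>\<^sub>F n in sequentially. (\<integral>x. min (F x) (real m) \<partial>\<mu> n) \<le> 1 + K"
      using F2_bound
    proof eventually_elim
      case (elim n)
      have "(\<integral>x. min (F x) (real m) \<partial>\<mu> n) \<le> (\<integral>x. F x \<partial>\<mu> n)"
        by (intro integral_mono[OF truncated_int F_int]) simp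
      with elim F_le[of n] show ?case by simp
    qed
    then show "\<exists>N. \<forall>n\<ge>N. (\<integral>x. min (F x) (real m) \<partial>\<mu> n) \<le> 1 + K"
      by (simp add: eventually_sequentially)
  qed
  note truncation = tendsto_integral_min_truncation[OF \<nu>.finite_measure_axioms _ nonneg this]
  show ?thesis
  proof (rule LIMSEQ_of_uniform_approximations)
    show "(\<lambda>n. \<integral>x. min (F x) (real (Suc m)) \<partial>\<mu> n) \<longlonglongrightarrow> (\<integral>x. min (F x) (real (Suc m)) \<partial>\<nu>)" for m
      by (rule truncated_conv)
    show "(\<lambda>m. \<integral>x. min (F x) (real (Suc m)) \<partial>\<nu>) \<longlonglongrightarrow> (\<integral>x. F x \<partial>\<nu>)"
      using truncation(2) by (rule LIMSEQ_Suc) simp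
    show "(\<lambda>m. K / real (Suc m)) \<longlonglongrightarrow> 0" by real_asymp
    show "\<forall>\<^sub>F n in sequentially. \<bar>(\<integral>x. F x \<partial>\<mu> n) - (\<integral>x. min (F x) (real (Suc m)) \<partial>\<mu> n)\<bar> \<le> K / real (Suc m)" for m
      using F2_bound
    proof eventually_elim
      case (elim n)
      note err = integral_min_truncation_error_le[OF F_int[of n] F2_int[of n] nonneg, of "real (Suc m)"]
      have "(\<integral>x. (F x)\<^sup>2 \<partial>\<mu> n) / real (Suc m) \<le> K / real (Suc m)"
        using elim by (intro divide_right_mono) auto
      with err show ?case by simp
    qed
  qed
qed

section \<open>The CRR tree as a random walk\<close>

text \<open>
  The trees are parametrised by the square root s = sqrt(tau / n) of the time step, so that
  u = exp(sigma s), d = exp(-sigma s) and R = exp(r s^2); crr_up_prob is the risk-neutral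
  up-probability q. Since binomial_pmf is only meaningful for probabilities in [0, 1],
  crr_prob clamps q; the two agree for all large n (eventually_crr_prob_eq). The law
  crr_log_law is that of log(u^j d^(n-j)) for a binomially distributed number j of up-moves.
\<close>

definition crr_up_prob :: "real \<Rightarrow> real \<Rightarrow> real \<Rightarrow> real" where
  "crr_up_prob r \<sigma> s = (exp (r * s\<^sup>2) - exp (- (\<sigma> * s))) / (exp (\<sigma> * s) - exp (- (\<sigma> * s)))"

definition crr_prob :: "real \<Rightarrow> real \<Rightarrow> real \<Rightarrow> nat \<Rightarrow> real" where
  "crr_prob r \<sigma> \<tau> n = min 1 (max 0 (crr_up_prob r \<sigma> (sqrt (\<tau> / real n))))"

definition crr_log_price :: "real \<Rightarrow> real \<Rightarrow> nat \<Rightarrow> nat \<Rightarrow> real" where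
  "crr_log_price \<sigma> \<tau> n j = \<sigma> * sqrt (\<tau> / real n) * (2 * real j - real n)"

definition crr_log_law :: "real \<Rightarrow> real \<Rightarrow> real \<Rightarrow> nat \<Rightarrow> real measure" where
  "crr_log_law r \<sigma> \<tau> n =
     distr (measure_pmf (binomial_pmf n (crr_prob r \<sigma> \<tau> n))) borel (crr_log_price \<sigma> \<tau> n)"

definition bs_log_law :: "real \<Rightarrow> real \<Rightarrow> real \<Rightarrow> real measure" where
  "bs_log_law r \<sigma> \<tau> = distr std_normal_distribution borel (\<lambda>x. (r - \<sigma>\<^sup>2 / 2) * \<tau> + \<sigma> * sqrt \<tau> * x)"

lemma crr_up_prob_tendsto:
  assumes "r \<ge> 0" "\<sigma> > 0"
  shows "(crr_up_prob r \<sigma> \<longlongrightarrow> 1/2) (at_right 0)"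
  using assms unfolding crr_up_prob_def by (real_asymp simp: field_simps)

lemma crr_up_prob_drift_tendsto:
  assumes "r \<ge> 0" "\<sigma> > 0"
  shows "((\<lambda>s. (2 * crr_up_prob r \<sigma> s - 1) * sin (t * (\<sigma> * s)) / s\<^sup>2) \<longlongrightarrow> t * (r - \<sigma>\<^sup>2 / 2))
    (at_right 0)"
  using assms unfolding crr_up_prob_def by (real_asymp simp: field_simps power2_eq_square)

lemma crr_up_prob_exp2_tendsto:
  assumes "r \<ge> 0" "\<sigma> > 0"
  shows "((\<lambda>s. (crr_up_prob r \<sigma> s * exp (2 * (\<sigma> * s)) + (1 - crr_up_prob r \<sigma> s) * exp (- (2 * (\<sigma> * s)))
      - 1) / s\<^sup>2) \<longlongrightarrow> 2 * r + \<sigma>\<^sup>2) (at_right 0)"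
  using assms unfolding crr_up_prob_def by (real_asymp simp: field_simps power2_eq_square)

lemma eventually_crr_prob_eq:
  assumes "r \<ge> 0" "\<sigma> > 0" "\<tau> > 0"
  shows "\<forall>\<^sub>F n in sequentially. n > 0 \<and> crr_prob r \<sigma> \<tau> n = crr_up_prob r \<sigma> (sqrt (\<tau> / real n))"
proof -
  have "filterlim (\<lambda>n. sqrt (\<tau> / real n)) (at_right 0) sequentially"
    using \<open>\<tau> > 0\<close> by real_asymp
  from filterlim_compose[OF crr_up_prob_tendsto[OF assms(1,2)] this]
  have lim: "(\<lambda>n. crr_up_prob r \<sigma> (sqrt (\<tau> / real n))) \<longlonglongrightarrow> 1/2" .
  have "\<forall>\<^sub>F n in sequentially. 0 < crr_up_prob r \<sigma> (sqrt (\<tau> / real n))"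
    by (rule order_tendstoD(1)[OF lim]) simp
  moreover have "\<forall>\<^sub>F n in sequentially. crr_up_prob r \<sigma> (sqrt (\<tau> / real n)) < 1"
    by (rule order_tendstoD(2)[OF lim]) simp
  ultimately show ?thesis
    using eventually_gt_at_top[of 0] by eventually_elim (simp add: crr_prob_def)
qed

lemma crr_prob_range: "0 \<le> crr_prob r \<sigma> \<tau> n" "crr_prob r \<sigma> \<tau> n \<le> 1"
  by (auto simp: crr_prob_def)

lemma real_distribution_crr_log_law: "real_distribution (crr_log_law r \<sigma> \<tau> n)"
  unfolding crr_log_law_def by (rule prob_space.real_distribution_distr[OF prob_space_measure_pmf]) simp

lemma real_distribution_bs_log_law: "real_distribution (bs_log_law r \<sigma> \<tau>)"
proof -
  interpret N: real_distribution std_normal_distribution by (rule real_dist_normal_dist)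
  show ?thesis unfolding bs_log_law_def by (rule N.real_distribution_distr) simp
qed

lemma integral_crr_log_law:
  fixes g :: "real \<Rightarrow> 'b::{banach, second_countable_topology}"
  assumes [measurable]: "g \<in> borel_measurable borel"
  shows "(\<integral>x. g x \<partial>crr_log_law r \<sigma> \<tau> n) =
    (\<Sum>j\<le>n. (real (n choose j) * crr_prob r \<sigma> \<tau> n ^ j * (1 - crr_prob r \<sigma> \<tau> n) ^ (n - j))
       *\<^sub>R g (crr_log_price \<sigma> \<tau> n j))"
proof -
  have "(\<integral>x. g x \<partial>crr_log_law r \<sigma> \<tau> n) =
      (\<integral>j. g (crr_log_price \<sigma> \<tau> n j) \<partial>measure_pmf (binomial_pmf n (crr_prob r \<sigma> \<tau> n)))"
    unfolding crr_log_law_def by (subst integral_distr) auto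
  also have "\<dots> = (\<Sum>j\<le>n. pmf (binomial_pmf n (crr_prob r \<sigma> \<tau> n)) j *\<^sub>R g (crr_log_price \<sigma> \<tau> n j))"
    by (rule integral_measure_pmf)
      (use crr_prob_range in \<open>auto simp: set_pmf_binomial_eq split: if_splits\<close>)
  finally show ?thesis using crr_prob_range by simp
qed

lemma integrable_crr_log_law:
  fixes g :: "real \<Rightarrow> 'b::{banach, second_countable_topology}"
  assumes [measurable]: "g \<in> borel_measurable borel"
  shows "integrable (crr_log_law r \<sigma> \<tau> n) g"
  unfolding crr_log_law_def
  by (subst integrable_distr_eq) (use crr_prob_range in \<open>auto intro!: integrable_measure_pmf_finite
      simp: set_pmf_binomial_eq\<close>)

lemma exp_mult_crr_log_price:
  fixes c :: "'a::{real_normed_field, banach}"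
  assumes "j \<le> n"
  shows "exp (c * of_real (crr_log_price \<sigma> \<tau> n j)) =
    exp (c * of_real (\<sigma> * sqrt (\<tau> / real n))) ^ j * exp (- (c * of_real (\<sigma> * sqrt (\<tau> / real n)))) ^ (n - j)"
proof -
  define \<theta> where "\<theta> = c * of_real (\<sigma> * sqrt (\<tau> / real n))"
  have "c * of_real (crr_log_price \<sigma> \<tau> n j) = of_nat j * \<theta> + of_nat (n - j) * (- \<theta>)"
    using assms by (simp add: crr_log_price_def \<theta>_def algebra_simps)
  then show ?thesis
    by (simp only: exp_add exp_of_nat_mult \<theta>_def)
qed

lemma integral_exp_mult_crr_log_law:
  fixes c :: "'a::{real_normed_field, banach, second_countable_topology}"
    and r \<sigma> \<tau> :: real and n :: nat
  defines "p \<equiv> crr_prob r \<sigma> \<tau> n" and "\<theta> \<equiv> c * of_real (\<sigma> * sqrt (\<tau> / real n))"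
  shows "(\<integral>x. exp (c * of_real x) \<partial>crr_log_law r \<sigma> \<tau> n) =
    (of_real p * exp \<theta> + of_real (1 - p) * exp (- \<theta>)) ^ n"
proof -
  have "(\<integral>x. exp (c * of_real x) \<partial>crr_log_law r \<sigma> \<tau> n) =
      (\<Sum>j\<le>n. (real (n choose j) * p ^ j * (1 - p) ^ (n - j)) *\<^sub>R (exp \<theta> ^ j * exp (- \<theta>) ^ (n - j)))"
    unfolding p_def \<theta>_def
    by (subst integral_crr_log_law) (auto intro!: sum.cong simp: exp_mult_crr_log_price)
  also have "\<dots> = (of_real p * exp \<theta> + of_real (1 - p) * exp (- \<theta>)) ^ n"
    by (subst binomial_ring)
      (simp add: atLeast0AtMost scaleR_conv_of_real power_mult_distrib mult_ac)
  finally show ?thesis .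
qed

lemma char_crr_log_law:
  fixes r \<sigma> \<tau> t :: real and n :: nat
  defines "p \<equiv> crr_prob r \<sigma> \<tau> n" and "\<theta> \<equiv> t * (\<sigma> * sqrt (\<tau> / real n))"
  shows "char (crr_log_law r \<sigma> \<tau> n) t = (of_real p * iexp \<theta> + of_real (1 - p) * iexp (- \<theta>)) ^ n"
  using integral_exp_mult_crr_log_law[where c="\<i> * of_real t" and r=r and \<sigma>=\<sigma> and \<tau>=\<tau> and n=n]
  unfolding char_def p_def \<theta>_def by (simp add: mult_ac)

lemma char_bs_log_law:
  "char (bs_log_law r \<sigma> \<tau>) t = iexp (t * ((r - \<sigma>\<^sup>2 / 2) * \<tau>)) * of_real (exp (- ((t * \<sigma> * sqrt \<tau>)\<^sup>2) / 2))"
proof -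
  have "char (bs_log_law r \<sigma> \<tau>) t =
      (\<integral>x. iexp (t * ((r - \<sigma>\<^sup>2 / 2) * \<tau>)) * iexp ((t * \<sigma> * sqrt \<tau>) * x) \<partial>std_normal_distribution)"
    unfolding char_def bs_log_law_def
    by (subst integral_distr) (auto simp: exp_add[symmetric] algebra_simps)
  also have "\<dots> = iexp (t * ((r - \<sigma>\<^sup>2 / 2) * \<tau>)) * char std_normal_distribution (t * \<sigma> * sqrt \<tau>)"
    unfolding char_def by simp
  finally show ?thesis by (simp add: char_std_normal_distribution)
qed

lemma binary_step_eq_one_plus_div:
  fixes p \<theta> :: real and n :: nat
  assumes "n > 0"
  shows "of_real p * iexp \<theta> + of_real (1 - p) * iexp (- \<theta>) =
    1 + Complex (real n * (cos \<theta> - 1)) (real n * ((2 * p - 1) * sin \<theta>)) / of_nat n"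
  using assms by (simp add: complex_eq_iff Re_exp Im_exp algebra_simps) (simp add: field_simps)

lemma tendsto_char_crr_log_law:
  assumes "r \<ge> 0" "\<sigma> > 0" "\<tau> > 0"
  shows "(\<lambda>n. char (crr_log_law r \<sigma> \<tau> n) t) \<longlonglongrightarrow> char (bs_log_law r \<sigma> \<tau>) t"
proof -
  define q where "q n = crr_up_prob r \<sigma> (sqrt (\<tau> / real n))" for n
  define \<theta> where "\<theta> n = t * (\<sigma> * sqrt (\<tau> / real n))" for n
  define z where "z n = Complex (real n * (cos (\<theta> n) - 1)) (real n * ((2 * q n - 1) * sin (\<theta> n)))" for n
  define w where "w = Complex (\<tau> * - ((t * \<sigma>)\<^sup>2 / 2)) (\<tau> * (t * (r - \<sigma>\<^sup>2 / 2)))"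
  have "(\<lambda>n. real n * (cos (\<theta> n) - 1)) \<longlonglongrightarrow> \<tau> * - ((t * \<sigma>)\<^sup>2 / 2)"
    unfolding \<theta>_def
    by (rule tendsto_mult_at_sqrt_time_step[where g="\<lambda>s. cos (t * (\<sigma> * s)) - 1", OF _ \<open>\<tau> > 0\<close>])
      (real_asymp simp: field_simps power2_eq_square)
  moreover have "(\<lambda>n. real n * ((2 * q n - 1) * sin (\<theta> n))) \<longlonglongrightarrow> \<tau> * (t * (r - \<sigma>\<^sup>2 / 2))"
    unfolding \<theta>_def q_def
    by (rule tendsto_mult_at_sqrt_time_step[OF crr_up_prob_drift_tendsto[OF assms(1,2)] \<open>\<tau> > 0\<close>])
  ultimately have "z \<longlonglongrightarrow> w"
    unfolding z_def w_def by (rule tendsto_Complex)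
  then have "(\<lambda>n. (1 + z n / of_nat n) ^ n) \<longlonglongrightarrow> exp w"
    by (rule tendsto_one_plus_div_power_exp)
  also have "exp w = char (bs_log_law r \<sigma> \<tau>) t"
  proof -
    have "w = \<i> * of_real (t * ((r - \<sigma>\<^sup>2 / 2) * \<tau>)) + of_real (- ((t * \<sigma> * sqrt \<tau>)\<^sup>2) / 2)"
      using assms by (simp add: w_def complex_eq_iff field_simps)
    then show ?thesis
      by (simp only: char_bs_log_law exp_add exp_of_real)
  qed
  finally have lim: "(\<lambda>n. (1 + z n / of_nat n) ^ n) \<longlonglongrightarrow> char (bs_log_law r \<sigma> \<tau>) t" .
  have "\<forall>\<^sub>F n in sequentially. (1 + z n / of_nat n) ^ n = char (crr_log_law r \<sigma> \<tau> n) t"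
    using eventually_crr_prob_eq[OF assms]
  proof eventually_elim
    case (elim n)
    then have "char (crr_log_law r \<sigma> \<tau> n) t = (of_real (q n) * iexp (\<theta> n) + of_real (1 - q n) * iexp (- \<theta> n)) ^ n"
      by (simp only: char_crr_log_law q_def \<theta>_def)
    also have "\<dots> = (1 + z n / of_nat n) ^ n"
      using elim by (simp only: binary_step_eq_one_plus_div[of n] z_def)
    finally show ?case by simp
  qed
  with lim show ?thesis by (rule Lim_transform_eventually)
qed

lemma weak_conv_crr_log_law:
  assumes "r \<ge> 0" "\<sigma> > 0" "\<tau> > 0"
  shows "weak_conv_m (crr_log_law r \<sigma> \<tau>) (bs_log_law r \<sigma> \<tau>)"
  using real_distribution_crr_log_law real_distribution_bs_log_law tendsto_char_crr_log_law[OF assms]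
  by (rule levy_continuity)

lemma bounded_integral_exp2_crr_log_law:
  assumes "r \<ge> 0" "\<sigma> > 0" "\<tau> > 0"
  obtains K where "\<forall>\<^sub>F n in sequentially. (\<integral>x. exp (2 * x) \<partial>crr_log_law r \<sigma> \<tau> n) \<le> K"
proof -
  define p where "p n = crr_prob r \<sigma> \<tau> n" for n
  define b where "b n = p n * exp (2 * (\<sigma> * sqrt (\<tau> / real n))) + (1 - p n) * exp (- (2 * (\<sigma> * sqrt (\<tau> / real n))))" for n
  have "(\<lambda>n. real n * (crr_up_prob r \<sigma> (sqrt (\<tau> / real n)) * exp (2 * (\<sigma> * sqrt (\<tau> / real n)))
      + (1 - crr_up_prob r \<sigma> (sqrt (\<tau> / real n))) * exp (- (2 * (\<sigma> * sqrt (\<tau> / real n)))) - 1))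
    \<longlonglongrightarrow> \<tau> * (2 * r + \<sigma>\<^sup>2)"
    by (rule tendsto_mult_at_sqrt_time_step[OF crr_up_prob_exp2_tendsto[OF assms(1,2)] \<open>\<tau> > 0\<close>])
  moreover have "\<forall>\<^sub>F n in sequentially. real n * (crr_up_prob r \<sigma> (sqrt (\<tau> / real n)) * exp (2 * (\<sigma> * sqrt (\<tau> / real n)))
      + (1 - crr_up_prob r \<sigma> (sqrt (\<tau> / real n))) * exp (- (2 * (\<sigma> * sqrt (\<tau> / real n)))) - 1) = real n * (b n - 1)"
    using eventually_crr_prob_eq[OF assms] by eventually_elim (simp add: b_def p_def)
  ultimately have "(\<lambda>n. real n * (b n - 1)) \<longlonglongrightarrow> \<tau> * (2 * r + \<sigma>\<^sup>2)"
    by (rule Lim_transform_eventually)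
  then have "\<forall>\<^sub>F n in sequentially. real n * (b n - 1) < \<tau> * (2 * r + \<sigma>\<^sup>2) + 1"
    by (rule order_tendstoD) simp
  then have "\<forall>\<^sub>F n in sequentially. (\<integral>x. exp (2 * x) \<partial>crr_log_law r \<sigma> \<tau> n) \<le> exp (\<tau> * (2 * r + \<sigma>\<^sup>2) + 1)"
  proof eventually_elim
    case (elim n)
    have "0 \<le> b n" using crr_prob_range by (simp add: b_def p_def)
    have "(\<integral>x. exp (2 * x) \<partial>crr_log_law r \<sigma> \<tau> n) = b n ^ n"
      using integral_exp_mult_crr_log_law[where c="2::real" and r=r and \<sigma>=\<sigma> and \<tau>=\<tau> and n=n]
      by (simp add: b_def p_def)
    also have "\<dots> \<le> exp (b n - 1) ^ n"
      using \<open>0 \<le> b n\<close> exp_ge_add_one_self[of "b n - 1"] by (intro power_mono) auto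
    also have "\<dots> = exp (real n * (b n - 1))"
      by (simp add: exp_of_nat_mult)
    also have "\<dots> \<le> exp (\<tau> * (2 * r + \<sigma>\<^sup>2) + 1)"
      using elim by simp
    finally show ?case .
  qed
  then show ?thesis by (rule that)
qed

lemma crr_price_eq_integral:
  assumes "\<tau> > 0" "n > 0" and q: "crr_prob r \<sigma> \<tau> n = crr_up_prob r \<sigma> (sqrt (\<tau> / real n))"
    and [measurable]: "(\<lambda>x. f (Z0 * exp x)) \<in> borel_measurable borel"
  shows "crr_price r \<sigma> Z0 f n \<tau> = exp (- r * \<tau>) * (\<integral>x. f (Z0 * exp x) \<partial>crr_log_law r \<sigma> \<tau> n)"
proof -
  define s where "s = sqrt (\<tau> / real n)"
  have s2: "s\<^sup>2 = \<tau> / real n" using assms by (simp add: s_def)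
  have q_eq: "(exp (r * \<tau> / real n) - 1 / exp (\<sigma> * s)) / (exp (\<sigma> * s) - 1 / exp (\<sigma> * s))
      = crr_prob r \<sigma> \<tau> n"
    unfolding q s_def[symmetric] crr_up_prob_def s2 by (simp add: exp_minus inverse_eq_divide)
  have "exp (r * \<tau> / real n) ^ n = exp (r * \<tau>)"
    using assms by (simp add: exp_of_nat_mult[symmetric])
  then have R_eq: "1 / exp (r * \<tau> / real n) ^ n = exp (- r * \<tau>)"
    by (simp add: exp_minus inverse_eq_divide)
  have node_eq: "Z0 * exp (\<sigma> * s) ^ j * (1 / exp (\<sigma> * s)) ^ (n - j) = Z0 * exp (crr_log_price \<sigma> \<tau> n j)"
    if "j \<le> n" for j
    using exp_mult_crr_log_price[OF that, where c="1::real" and \<sigma>=\<sigma> and \<tau>=\<tau>]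
    by (simp add: s_def exp_minus inverse_eq_divide)
  show ?thesis
    unfolding crr_price_def Let_def s_def[symmetric] q_eq R_eq integral_crr_log_law[OF assms(4)]
    by (intro arg_cong2[where f="(*)"] refl sum.cong) (auto simp: atLeast0AtMost node_eq)
qed

lemma bs_price_eq_integral:
  assumes "(\<lambda>x. f (Z0 * exp x)) \<in> borel_measurable borel"
  shows "bs_price r \<sigma> Z0 f \<tau> = exp (- r * \<tau>) * (\<integral>x. f (Z0 * exp x) \<partial>bs_log_law r \<sigma> \<tau>)"
  unfolding bs_price_def bs_log_law_def using assms by (subst integral_distr) auto

lemma bounded_integral_square_crr_log_law:
  fixes G :: "real \<Rightarrow> real"
  assumes "r \<ge> 0" "\<sigma> > 0" "\<tau> > 0"
    and [measurable]: "G \<in> borel_measurable borel" and G_le: "\<And>x. \<bar>G x\<bar> \<le> C * exp x"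
  obtains K where "\<forall>\<^sub>F n in sequentially. (\<integral>x. (G x)\<^sup>2 \<partial>crr_log_law r \<sigma> \<tau> n) \<le> K"
proof -
  obtain K where K: "\<forall>\<^sub>F n in sequentially. (\<integral>x. exp (2 * x) \<partial>crr_log_law r \<sigma> \<tau> n) \<le> K"
    using bounded_integral_exp2_crr_log_law[OF assms(1-3)] by blast
  have G2_le: "(G x)\<^sup>2 \<le> C\<^sup>2 * exp (2 * x)" for x
  proof -
    have "\<bar>G x\<bar>\<^sup>2 \<le> (C * exp x)\<^sup>2"
      by (intro power_mono G_le) simp
    then show ?thesis by (simp add: power_mult_distrib exp_double[symmetric])
  qed
  have "\<forall>\<^sub>F n in sequentially. (\<integral>x. (G x)\<^sup>2 \<partial>crr_log_law r \<sigma> \<tau> n) \<le> C\<^sup>2 * K"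
    using K
  proof eventually_elim
    case (elim n)
    have "(\<integral>x. (G x)\<^sup>2 \<partial>crr_log_law r \<sigma> \<tau> n) \<le> (\<integral>x. C\<^sup>2 * exp (2 * x) \<partial>crr_log_law r \<sigma> \<tau> n)"
      by (intro integral_mono integrable_crr_log_law G2_le) auto
    also have "\<dots> \<le> C\<^sup>2 * K"
      using elim by (simp add: mult_left_mono)
    finally show ?case .
  qed
  then show ?thesis by (rule that)
qed

lemma crr_price_tendsto_bs_price:
  fixes f :: "real \<Rightarrow> real"
  assumes "\<tau> > 0" "r \<ge> 0" "\<sigma> > 0" "Z0 > 0"
    and f_cont: "continuous_on {0..} f" and f_nonneg: "\<forall>x\<ge>0. f x \<ge> 0"
    and f_le: "\<forall>x\<ge>0. f x \<le> c * \<bar>x\<bar>"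
  shows "(\<lambda>n. crr_price r \<sigma> Z0 f n \<tau>) \<longlonglongrightarrow> bs_price r \<sigma> Z0 f \<tau>"
proof -
  define F where "F x = f (Z0 * exp x)" for x
  have "continuous_on UNIV F"
    unfolding F_def using \<open>Z0 > 0\<close>
    by (intro continuous_on_compose2[OF f_cont] continuous_intros) (auto simp: less_imp_le)
  then have F_cont: "isCont F x" for x
    by (simp add: continuous_on_eq_continuous_at)
  have F_meas [measurable]: "F \<in> borel_measurable borel"
    by (rule borel_measurable_continuous_onI) fact
  have F_nonneg: "0 \<le> F x" for x
    using f_nonneg \<open>Z0 > 0\<close> by (simp add: F_def less_imp_le)
  have "\<bar>F x\<bar> \<le> (c * Z0) * exp x" for x
    using f_nonneg f_le \<open>Z0 > 0\<close> by (simp add: F_def less_imp_le mult.assoc)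
  then obtain K where "\<forall>\<^sub>F n in sequentially. (\<integral>x. (F x)\<^sup>2 \<partial>crr_log_law r \<sigma> \<tau> n) \<le> K"
    using bounded_integral_square_crr_log_law[OF assms(2,3,1) F_meas] by blast
  with real_distribution_crr_log_law real_distribution_bs_log_law weak_conv_crr_log_law[OF assms(2,3,1)]
    F_cont F_nonneg integrable_crr_log_law
  have "(\<lambda>n. \<integral>x. F x \<partial>crr_log_law r \<sigma> \<tau> n) \<longlonglongrightarrow> (\<integral>x. F x \<partial>bs_log_law r \<sigma> \<tau>)"
    by (rule weak_conv_integral_tendsto_of_bounded_second_moment) auto
  then have "(\<lambda>n. exp (- r * \<tau>) * (\<integral>x. F x \<partial>crr_log_law r \<sigma> \<tau> n)) \<longlonglongrightarrow> bs_price r \<sigma> Z0 f \<tau>"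
    unfolding bs_price_eq_integral[OF F_meas[unfolded F_def]] F_def
    by (rule tendsto_mult_left)
  moreover have "\<forall>\<^sub>F n in sequentially. exp (- r * \<tau>) * (\<integral>x. F x \<partial>crr_log_law r \<sigma> \<tau> n) = crr_price r \<sigma> Z0 f n \<tau>"
    using eventually_crr_prob_eq[OF assms(2,3,1)]
    by eventually_elim (simp add: F_def crr_price_eq_integral[OF \<open>\<tau> > 0\<close>] F_meas[unfolded F_def])
  ultimately show ?thesis by (rule Lim_transform_eventually)
qed

section \<open>A uniform bound on the CRR prices\<close>

lemma abs_binomial_sum_le:
  fixes q u d Z C :: real and g :: "real \<Rightarrow> real"
  assumes "q \<ge> 0" "u > 0" "d > 0" "Z > 0" and g: "\<And>x. x > 0 \<Longrightarrow> \<bar>g x\<bar> \<le> C * x"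
  shows "\<bar>\<Sum>j=0..n. real (n choose j) * q ^ j * (1 - q) ^ (n - j) * g (Z * u ^ j * d ^ (n - j))\<bar>
    \<le> C * Z * (q * u + \<bar>1 - q\<bar> * d) ^ n"
proof -
  have "\<bar>\<Sum>j=0..n. real (n choose j) * q ^ j * (1 - q) ^ (n - j) * g (Z * u ^ j * d ^ (n - j))\<bar>
      \<le> (\<Sum>j=0..n. real (n choose j) * q ^ j * \<bar>1 - q\<bar> ^ (n - j) * (C * Z * (u ^ j * d ^ (n - j))))"
  proof (rule order.trans[OF sum_abs sum_mono])
    fix j
    have "\<bar>g (Z * u ^ j * d ^ (n - j))\<bar> \<le> C * Z * (u ^ j * d ^ (n - j))"
      using g[of "Z * u ^ j * d ^ (n - j)"] assms by (simp add: mult.assoc)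
    then show "\<bar>real (n choose j) * q ^ j * (1 - q) ^ (n - j) * g (Z * u ^ j * d ^ (n - j))\<bar>
       \<le> real (n choose j) * q ^ j * \<bar>1 - q\<bar> ^ (n - j) * (C * Z * (u ^ j * d ^ (n - j)))"
      using \<open>q \<ge> 0\<close> by (simp add: abs_mult power_abs mult_left_mono)
  qed
  also have "\<dots> = C * Z * (q * u + \<bar>1 - q\<bar> * d) ^ n"
    by (subst binomial_ring) (simp add: atLeast0AtMost sum_distrib_left power_mult_distrib mult_ac)
  finally show ?thesis .
qed

lemma binary_mean_eq:
  fixes u d R :: real
  assumes "u \<noteq> d"
  shows "(R - d) / (u - d) * u + (1 - (R - d) / (u - d)) * d = R"
proof -
  have affine: "q * u + (1 - q) * d = d + q * (u - d)" for q :: real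
    by (simp add: algebra_simps)
  show ?thesis unfolding affine using assms by simp
qed

lemma crr_growth_factor_le:
  fixes q u d R \<sigma> s r :: real
  assumes u: "u = exp (\<sigma> * s)" and d: "d = 1 / u" and q: "q = (R - d) / (u - d)"
    and "s > 0" "\<sigma> > 0" "R > 0" "q > 1" and rs: "\<sigma> < r * s"
  shows "(q * u + (q - 1) * d) / R \<le> 1 + r / \<sigma>\<^sup>2"
proof -
  have "\<sigma> * s > 0" using assms by simp
  then have "u > 1" using u by simp
  then have "d > 0" "d < 1" using d by simp_all
  then have "u - d > 0" using \<open>u > 1\<close> by simp
  have "u\<^sup>2 = exp (2 * (\<sigma> * s))" using u by (simp add: exp_double[symmetric])
  then have u2: "u\<^sup>2 - 1 \<ge> 2 * (\<sigma> * s)"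
    using exp_ge_add_one_self[of "2 * (\<sigma> * s)"] by linarith
  have "q * u + (1 - q) * d = R"
    using \<open>u - d > 0\<close> unfolding q by (intro binary_mean_eq) simp
  then have step: "q * u + (q - 1) * d = R + 2 * ((q - 1) * d)" by (simp add: algebra_simps)
  have "(q - 1) * d = (R - u) * d / (u - d)"
    using \<open>u - d > 0\<close> unfolding q by (simp add: field_simps)
  also have "\<dots> \<le> R * d / (u - d)"
    using \<open>u - d > 0\<close> \<open>d > 0\<close> \<open>u > 1\<close> by (intro divide_right_mono mult_right_mono) auto
  also have "\<dots> = R / (u\<^sup>2 - 1)"
    using \<open>u > 1\<close> unfolding d by (simp add: field_simps power2_eq_square)
  also have "\<dots> \<le> R / (2 * (\<sigma> * s))"
    using u2 \<open>R > 0\<close> \<open>\<sigma> * s > 0\<close> by (intro divide_left_mono) auto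
  finally have "q * u + (q - 1) * d \<le> R * (1 + 1 / (\<sigma> * s))"
    using step \<open>\<sigma> * s > 0\<close> by (simp add: field_simps)
  also have "1 / (\<sigma> * s) \<le> r / \<sigma>\<^sup>2"
    using rs \<open>s > 0\<close> \<open>\<sigma> > 0\<close> by (simp add: field_simps power2_eq_square mult_left_mono)
  then have "R * (1 + 1 / (\<sigma> * s)) \<le> R * (1 + r / \<sigma>\<^sup>2)"
    using \<open>R > 0\<close> by simp
  finally show ?thesis using \<open>R > 0\<close> by (simp add: divide_le_eq mult.commute)
qed

lemma coarse_tree_steps_le:
  fixes r \<sigma> \<tau> s :: real
  assumes "\<sigma> < r * s" "s\<^sup>2 = \<tau> / real n" "n > 0" "\<sigma> > 0" "s > 0"
  shows "real n * (r / \<sigma>\<^sup>2) \<le> r ^ 3 / \<sigma> ^ 4 * \<tau>"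
proof -
  have "0 < r * s" using assms by linarith
  then have "r > 0" using \<open>s > 0\<close> by (simp add: zero_less_mult_iff)
  have "\<sigma>\<^sup>2 < (r * s)\<^sup>2" using assms by (intro power_strict_mono) auto
  then have "real n * \<sigma>\<^sup>2 < r\<^sup>2 * \<tau>"
    using assms by (simp add: power_mult_distrib field_simps)
  then have "real n * \<sigma>\<^sup>2 * (r / \<sigma> ^ 4) \<le> r\<^sup>2 * \<tau> * (r / \<sigma> ^ 4)"
    using \<open>r > 0\<close> by (intro mult_right_mono) auto
  then show ?thesis using assms by (simp add: field_simps power_def)
qed

text \<open>
  For q <= 1 the discounted tree price is a martingale and the growth factor is 1; q > 1 is only
  possible on coarse trees, where sigma < r s.
\<close>

lemma crr_growth_factor_power_le:
  fixes u d R q \<sigma> s r \<tau> :: real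
  assumes u: "u = exp (\<sigma> * s)" and d: "d = 1 / u" and q: "q = (R - d) / (u - d)"
    and R: "R = exp (r * s\<^sup>2)" and s: "s > 0" "s\<^sup>2 = \<tau> / real n"
    and "\<tau> > 0" "n > 0" "\<sigma> > 0" "r \<ge> 0"
  shows "((q * u + \<bar>1 - q\<bar> * d) / R) ^ n \<le> exp (r ^ 3 / \<sigma> ^ 4 * \<tau>)"
proof -
  have "u > 1" using assms by (simp add: u)
  then have "0 < d" "d < 1" by (simp_all add: d)
  then have "u - d > 0" using \<open>u > 1\<close> by simp
  have "R \<ge> 1" unfolding R using \<open>r \<ge> 0\<close> by simp
  then have "q \<ge> 0" using \<open>d < 1\<close> \<open>u - d > 0\<close> by (simp add: q)
  show ?thesis
  proof (cases "q \<le> 1")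
    case True
    then have "q * u + \<bar>1 - q\<bar> * d = R"
      using binary_mean_eq[of u d R] \<open>u - d > 0\<close> unfolding q by simp
    then show ?thesis using \<open>R \<ge> 1\<close> assms by simp
  next
    case False
    then have "R > u" using \<open>u - d > 0\<close> unfolding q by (simp add: field_simps)
    then have "\<sigma> * s < r * s\<^sup>2" unfolding R u by simp
    then have rs: "\<sigma> < r * s" using \<open>s > 0\<close> by (simp add: power2_eq_square)
    have "(q * u + \<bar>1 - q\<bar> * d) / R \<le> 1 + r / \<sigma>\<^sup>2"
      using crr_growth_factor_le[OF u d q \<open>s > 0\<close> \<open>\<sigma> > 0\<close> _ _ rs] \<open>R \<ge> 1\<close> False
      by simp
    also have "\<dots> \<le> exp (r / \<sigma>\<^sup>2)" by (rule exp_ge_add_one_self)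
    finally have "((q * u + \<bar>1 - q\<bar> * d) / R) ^ n \<le> exp (r / \<sigma>\<^sup>2) ^ n"
      using \<open>q \<ge> 0\<close> \<open>u > 1\<close> \<open>d > 0\<close> \<open>R \<ge> 1\<close> by (intro power_mono) auto
    also have "\<dots> = exp (real n * (r / \<sigma>\<^sup>2))" by (rule exp_of_nat_mult[symmetric])
    also have "\<dots> \<le> exp (r ^ 3 / \<sigma> ^ 4 * \<tau>)"
      using coarse_tree_steps_le[OF rs s(2) \<open>n > 0\<close> \<open>\<sigma> > 0\<close> \<open>s > 0\<close>] by simp
    finally show ?thesis .
  qed
qed

lemma crr_price_bound:
  fixes f :: "real \<Rightarrow> real"
  assumes "\<tau> > 0" "n > 0" "r \<ge> 0" "\<sigma> > 0" "Z0 > 0"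
    and f_nonneg: "\<forall>x\<ge>0. f x \<ge> 0" and f_le: "\<forall>x\<ge>0. f x \<le> c * \<bar>x\<bar>"
  shows "\<bar>crr_price r \<sigma> Z0 f n \<tau>\<bar> \<le> c * Z0 * exp (r ^ 3 / \<sigma> ^ 4 * \<tau>)"
proof -
  define s where "s = sqrt (\<tau> / real n)"
  define u where "u = exp (\<sigma> * s)"
  define d where "d = 1 / u"
  define R where "R = exp (r * \<tau> / real n)"
  define q where "q = (R - d) / (u - d)"
  have "s > 0" "s\<^sup>2 = \<tau> / real n" using assms by (simp_all add: s_def)
  then have "u > 1" "R = exp (r * s\<^sup>2)" "R \<ge> 1" using assms by (simp_all add: u_def R_def)
  then have "0 < d" "d < 1" by (simp_all add: d_def)
  then have "q \<ge> 0" using \<open>u > 1\<close> \<open>R \<ge> 1\<close> by (simp add: q_def)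
  have "0 \<le> f 1" "f 1 \<le> c" using f_nonneg f_le[rule_format, of 1] by auto
  then have "c * Z0 \<ge> 0" using \<open>Z0 > 0\<close> by simp
  have "\<bar>crr_price r \<sigma> Z0 f n \<tau>\<bar> \<le> c * Z0 * (q * u + \<bar>1 - q\<bar> * d) ^ n / R ^ n"
    unfolding crr_price_def Let_def s_def[symmetric] u_def[symmetric] d_def[symmetric]
      R_def[symmetric] q_def[symmetric]
    using abs_binomial_sum_le[OF \<open>q \<ge> 0\<close> _ \<open>0 < d\<close> \<open>Z0 > 0\<close>, of u f c n] \<open>u > 1\<close> \<open>R \<ge> 1\<close> f_nonneg f_le
    by (simp add: abs_mult divide_right_mono)
  also have "\<dots> = c * Z0 * ((q * u + \<bar>1 - q\<bar> * d) / R) ^ n"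
    by (simp add: power_divide)
  also have "\<dots> \<le> c * Z0 * exp (r ^ 3 / \<sigma> ^ 4 * \<tau>)"
    using crr_growth_factor_power_le[OF u_def d_def q_def \<open>R = exp (r * s\<^sup>2)\<close> \<open>s > 0\<close> \<open>s\<^sup>2 = \<tau> / real n\<close>]
      assms \<open>c * Z0 \<ge> 0\<close> by (intro mult_left_mono) auto
  finally show ?thesis .
qed

section \<open>Levy measures and inverse subordinators\<close>

lemma levy_measure_sets: "levy_measure \<nu> \<Longrightarrow> sets \<nu> = sets borel"
  by (simp add: levy_measure_def)

lemma AE_levy_measure_pos:
  assumes "levy_measure \<nu>"
  shows "AE x in \<nu>. x > 0"
proof (rule AE_I'[of "{..0}"])
  show "{..0::real} \<in> null_sets \<nu>"
    using assms by (auto simp: levy_measure_def null_sets_def)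
qed auto

lemma levy_measure_tail_finite:
  assumes "levy_measure \<nu>" "0 < \<epsilon>" "\<epsilon> \<le> 1"
  shows "emeasure \<nu> {\<epsilon><..} < \<infinity>"
proof -
  have [measurable_cong]: "sets \<nu> = sets borel" using assms(1) by (rule levy_measure_sets)
  have "emeasure \<nu> {\<epsilon><..} = (\<integral>\<^sup>+ x. indicator {\<epsilon><..} x \<partial>\<nu>)"
    by (simp add: nn_integral_indicator)
  also have "\<dots> \<le> (\<integral>\<^sup>+ x. ennreal (1 / \<epsilon>) * ennreal (min 1 x) \<partial>\<nu>)"
  proof (rule nn_integral_mono)
    fix x
    show "indicator {\<epsilon><..} x \<le> ennreal (1 / \<epsilon>) * ennreal (min 1 x)"
    proof (cases "x > \<epsilon>")
      case True
      then have "1 \<le> 1 / \<epsilon> * min 1 x" using assms by (simp add: field_simps)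
      then have "ennreal 1 \<le> ennreal (1 / \<epsilon> * min 1 x)" by (rule ennreal_leI)
      also have "\<dots> = ennreal (1 / \<epsilon>) * ennreal (min 1 x)"
        using True assms by (intro ennreal_mult) auto
      finally show ?thesis using True by simp
    qed simp
  qed
  also have "\<dots> = ennreal (1 / \<epsilon>) * (\<integral>\<^sup>+ x. ennreal (min 1 x) \<partial>\<nu>)"
    by (intro nn_integral_cmult) measurable
  also have "\<dots> < \<infinity>" using assms(1) by (simp add: levy_measure_def ennreal_mult_less_top)
  finally show ?thesis .
qed

lemma incseq_greaterThan_one_over_Suc: "incseq (\<lambda>m. {1 / real (Suc m) <..})"
  unfolding incseq_def
proof (intro allI impI subsetI)
  fix m n x assume "m \<le> n" "x \<in> {1 / real (Suc m)<..}"
  moreover have "1 / real (Suc n) \<le> 1 / real (Suc m)"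
    using \<open>m \<le> n\<close> by (intro divide_left_mono) auto
  ultimately show "x \<in> {1 / real (Suc n)<..}" by simp
qed

lemma UN_greaterThan_one_over_Suc: "(\<Union>m. {1 / real (Suc m) <..}) = {0::real<..}"
proof (intro set_eqI iffI)
  fix x :: real assume "x \<in> {0<..}"
  then obtain m where "inverse (real (Suc m)) < x" using reals_Archimedean by auto
  then show "x \<in> (\<Union>m. {1 / real (Suc m) <..})" by (auto simp: inverse_eq_divide)
next
  fix x :: real assume "x \<in> (\<Union>m. {1 / real (Suc m) <..})"
  then obtain m where "1 / real (Suc m) < x" by auto
  then show "x \<in> {0<..}"
    using less_trans[of 0 "1 / real (Suc m)" x] by simp
qed

lemma levy_measure_tail_unbounded:
  assumes "levy_measure \<nu>"
  obtains \<epsilon> where "0 < \<epsilon>" "\<epsilon> \<le> 1" "A < measure \<nu> {\<epsilon><..}"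
proof -
  have "range (\<lambda>m. {1 / real (Suc m) <..}) \<subseteq> sets \<nu>"
    unfolding levy_measure_sets[OF assms] by auto
  from SUP_emeasure_incseq[OF this incseq_greaterThan_one_over_Suc]
  have "(SUP m. emeasure \<nu> {1 / real (Suc m) <..}) = emeasure \<nu> {0<..}"
    by (simp only: UN_greaterThan_one_over_Suc)
  also have "\<dots> = \<infinity>"
    using assms by (simp add: levy_measure_def)
  finally have sup_inf: "(SUP m. emeasure \<nu> {1 / real (Suc m) <..}) = \<infinity>" .
  have "ennreal (max A 0) < (SUP m. emeasure \<nu> {1 / real (Suc m) <..})"
    unfolding sup_inf by simp
  then obtain m where m: "ennreal (max A 0) < emeasure \<nu> {1 / real (Suc m) <..}"
    by (auto simp: less_SUP_iff)
  define \<epsilon> where "\<epsilon> = 1 / real (Suc m)"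
  have "0 < \<epsilon>" "\<epsilon> \<le> 1" by (auto simp: \<epsilon>_def)
  have "emeasure \<nu> {\<epsilon><..} = ennreal (measure \<nu> {\<epsilon><..})"
    using levy_measure_tail_finite[OF assms \<open>0 < \<epsilon>\<close> \<open>\<epsilon> \<le> 1\<close>] by (intro emeasure_eq_ennreal_measure) simp
  with m have "ennreal (max A 0) < ennreal (measure \<nu> {\<epsilon><..})"
    unfolding \<epsilon>_def[symmetric] by simp
  then have "max A 0 < measure \<nu> {\<epsilon><..}"
    by (subst (asm) ennreal_less_iff) auto
  then have "A < measure \<nu> {\<epsilon><..}" by simp
  with \<open>0 < \<epsilon>\<close> \<open>\<epsilon> \<le> 1\<close> show ?thesis by (rule that)
qed

lemma integrable_levy_measure_one_minus_exp:
  assumes "levy_measure \<nu>" "u \<ge> 0"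
  shows "integrable \<nu> (\<lambda>x. 1 - exp (- u * x))"
proof -
  have [measurable_cong]: "sets \<nu> = sets borel" using assms(1) by (rule levy_measure_sets)
  have "integrable \<nu> (\<lambda>x. min 1 x)"
    using assms AE_levy_measure_pos[OF assms(1)]
    by (intro integrableI_nonneg) (auto simp: levy_measure_def elim: eventually_mono)
  then have "integrable \<nu> (\<lambda>x. max 1 u * min 1 x)"
    by (rule integrable_mult_right)
  then show ?thesis
  proof (rule Bochner_Integration.integrable_bound)
    show "AE x in \<nu>. norm (1 - exp (- u * x)) \<le> norm (max 1 u * min 1 x)"
      using AE_levy_measure_pos[OF assms(1)]
    proof eventually_elim
      case (elim x)
      have "1 - exp (- u * x) \<le> max 1 u * min 1 x"
      proof (cases "x \<le> 1")
        case True
        have "1 - exp (- u * x) \<le> u * x" using exp_ge_add_one_self[of "- u * x"] by simp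
        also have "\<dots> \<le> max 1 u * x" using elim by (intro mult_right_mono) auto
        finally show ?thesis using True by simp
      next
        case False
        have "1 - exp (- u * x) \<le> 1" by simp
        also have "1 \<le> max 1 u * min 1 x" using False by simp
        finally show ?thesis .
      qed
      moreover have "exp (- u * x) \<le> 1" using elim assms by simp
      ultimately show ?case using elim by simp
    qed
  qed measurable
qed

lemma laplace_exponent_ge_tail:
  assumes "levy_measure \<nu>" "u \<ge> 0" "0 < \<epsilon>" "\<epsilon> \<le> 1"
  shows "(1 - exp (- u * \<epsilon>)) * measure \<nu> {\<epsilon><..} \<le> laplace_exponent \<nu> u"
proof -
  have sets: "sets \<nu> = sets borel" using assms(1) by (rule levy_measure_sets)
  have "(1 - exp (- u * \<epsilon>)) * measure \<nu> {\<epsilon><..} = (\<integral>x. (1 - exp (- u * \<epsilon>)) * indicator {\<epsilon><..} x \<partial>\<nu>)"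
    using sets.sets_into_space[of "{\<epsilon><..}" \<nu>] sets by (simp add: Int_absorb2)
  also have "\<dots> \<le> (\<integral>x. 1 - exp (- u * x) \<partial>\<nu>)"
  proof (rule integral_mono_AE)
    show "integrable \<nu> (\<lambda>x. (1 - exp (- u * \<epsilon>)) * indicator {\<epsilon><..} x)"
      using sets levy_measure_tail_finite[OF assms(1,3,4)]
      by (intro integrable_mult_right integrable_real_indicator) auto
    show "integrable \<nu> (\<lambda>x. 1 - exp (- u * x))"
      using assms(1,2) by (rule integrable_levy_measure_one_minus_exp)
    show "AE x in \<nu>. (1 - exp (- u * \<epsilon>)) * indicator {\<epsilon><..} x \<le> 1 - exp (- u * x)"
      using AE_levy_measure_pos[OF assms(1)]
      by eventually_elim (use assms(2) in \<open>auto simp: indicator_def mult_left_mono\<close>)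
  qed
  finally show ?thesis by (simp add: laplace_exponent_def)
qed

lemma laplace_exponent_unbounded:
  assumes "levy_measure \<nu>"
  obtains u where "u \<ge> 0" "A \<le> laplace_exponent \<nu> u"
proof -
  obtain \<epsilon> where \<epsilon>: "0 < \<epsilon>" "\<epsilon> \<le> 1" and tail: "2 * max A 0 < measure \<nu> {\<epsilon><..}"
    by (rule levy_measure_tail_unbounded[OF assms])
  define u where "u = 1 / \<epsilon>"
  have "u \<ge> 0" using \<epsilon> by (simp add: u_def)
  have "exp (- u * \<epsilon>) = exp (- 1)" using \<epsilon> by (simp add: u_def)
  also have "\<dots> \<le> 1 / 2"
    using exp_ge_add_one_self[of 1] by (simp add: exp_minus field_simps)
  finally have "1 / 2 * measure \<nu> {\<epsilon><..} \<le> (1 - exp (- u * \<epsilon>)) * measure \<nu> {\<epsilon><..}"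
    using tail by (intro mult_right_mono) auto
  also have "\<dots> \<le> laplace_exponent \<nu> u"
    using assms \<open>u \<ge> 0\<close> \<epsilon> by (rule laplace_exponent_ge_tail)
  finally have "A \<le> laplace_exponent \<nu> u"
    using tail max.cobounded1[of A 0] by linarith
  with \<open>u \<ge> 0\<close> show ?thesis by (rule that)
qed

lemma subordinator_prob_space: "subordinator M U \<psi> \<Longrightarrow> prob_space M"
  by (simp add: subordinator_def)

lemma subordinator_measurable: "subordinator M U \<psi> \<Longrightarrow> t \<ge> 0 \<Longrightarrow> U t \<in> borel_measurable M"
  by (simp add: subordinator_def)

lemma subordinator_path:
  "subordinator M U \<psi> \<Longrightarrow> \<omega> \<in> space M \<Longrightarrow>
    U 0 \<omega> = 0 \<and> mono_on {0..} (\<lambda>t. U t \<omega>) \<and> (\<forall>t\<ge>0. continuous (at_right t) (\<lambda>s. U s \<omega>))"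
  by (simp add: subordinator_def)

lemma subordinator_laplace:
  "subordinator M U \<psi> \<Longrightarrow> t \<ge> 0 \<Longrightarrow> u \<ge> 0 \<Longrightarrow>
    prob_space.expectation M (\<lambda>\<omega>. exp (- u * U t \<omega>)) = exp (- t * \<psi> u)"
  by (simp add: subordinator_def)

lemma subordinator_mono:
  assumes "subordinator M U \<psi>" "\<omega> \<in> space M" "0 \<le> s" "s \<le> t"
  shows "U s \<omega> \<le> U t \<omega>"
  using subordinator_path[OF assms(1,2)] assms(3,4) by (auto intro: mono_onD)

lemma subordinator_nonneg:
  assumes "subordinator M U \<psi>" "\<omega> \<in> space M" "t \<ge> 0"
  shows "U t \<omega> \<ge> 0"
  using subordinator_mono[OF assms(1,2) order_refl assms(3)] subordinator_path[OF assms(1,2)] by simp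

lemma subordinator_prob_le:
  assumes sub: "subordinator M U \<psi>" and "k \<ge> 0" "u \<ge> 0"
  shows "measure M {\<omega>\<in>space M. U k \<omega> \<le> T} \<le> exp (u * T) * exp (- k * \<psi> u)"
proof -
  interpret prob_space M using sub by (rule subordinator_prob_space)
  have [measurable]: "U k \<in> borel_measurable M" using sub \<open>k \<ge> 0\<close> by (rule subordinator_measurable)
  have "integrable M (\<lambda>\<omega>. exp (- u * U k \<omega>))"
    using subordinator_nonneg[OF sub _ \<open>k \<ge> 0\<close>] \<open>u \<ge> 0\<close>
    by (intro integrable_const_bound[where B=1]) auto
  then have int: "integrable M (\<lambda>\<omega>. exp (u * T) * exp (- u * U k \<omega>))" by simp
  have "measure M {\<omega>\<in>space M. U k \<omega> \<le> T} = (\<integral>\<omega>. indicator {\<omega>\<in>space M. U k \<omega> \<le> T} \<omega> \<partial>M)"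
    by (simp add: Int_absorb2)
  also have "\<dots> \<le> (\<integral>\<omega>. exp (u * T) * exp (- u * U k \<omega>) \<partial>M)"
  proof (rule integral_mono[OF _ int])
    show "integrable M (indicator {\<omega>\<in>space M. U k \<omega> \<le> T} :: 'a \<Rightarrow> real)"
      by (intro integrable_real_indicator) (auto simp: less_top[symmetric])
    fix \<omega> assume "\<omega> \<in> space M"
    have "U k \<omega> \<le> T \<Longrightarrow> 1 \<le> exp (u * T) * exp (- u * U k \<omega>)"
      using \<open>u \<ge> 0\<close> by (simp add: exp_add[symmetric] mult_left_mono)
    then show "indicator {\<omega>\<in>space M. U k \<omega> \<le> T} \<omega> \<le> exp (u * T) * exp (- u * U k \<omega>)"
      by (simp add: indicator_def)
  qed
  also have "\<dots> = exp (u * T) * exp (- k * \<psi> u)"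
    using subordinator_laplace[OF sub \<open>k \<ge> 0\<close> \<open>u \<ge> 0\<close>] by simp
  finally show ?thesis .
qed

lemma AE_subordinator_exceeds:
  assumes sub: "subordinator M U \<psi>" and "u \<ge> 0" "\<psi> u > 0"
  shows "AE \<omega> in M. \<exists>\<tau>>0. U \<tau> \<omega> > T"
proof -
  interpret prob_space M using sub by (rule subordinator_prob_space)
  have [measurable]: "U (real (Suc k)) \<in> borel_measurable M" for k
    using sub by (rule subordinator_measurable) simp
  define N where "N = {\<omega>\<in>space M. \<forall>k. U (real (Suc k)) \<omega> \<le> T}"
  have [measurable]: "N \<in> sets M" unfolding N_def by measurable
  have bound: "measure M N \<le> exp (u * T) * exp (- real (Suc k) * \<psi> u)" for k
  proof -
    have "{\<omega>\<in>space M. U (real (Suc k)) \<omega> \<le> T} \<in> sets M" by measurable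
    then have "measure M N \<le> measure M {\<omega>\<in>space M. U (real (Suc k)) \<omega> \<le> T}"
      by (rule finite_measure_mono[rotated]) (auto simp: N_def)
    also have "\<dots> \<le> exp (u * T) * exp (- real (Suc k) * \<psi> u)"
      using sub _ \<open>u \<ge> 0\<close> by (rule subordinator_prob_le) simp
    finally show ?thesis .
  qed
  have lim: "(\<lambda>k. exp (u * T) * exp (- real (Suc k) * \<psi> u)) \<longlonglongrightarrow> 0"
    using \<open>\<psi> u > 0\<close> by real_asymp
  have "measure M N \<le> 0"
    using LIMSEQ_le_const[OF lim, of "measure M N"] bound by blast
  then have "N \<in> null_sets M"
    using measure_nonneg[of M N] by (simp add: null_sets_def emeasure_eq_measure)
  then show ?thesis
  proof (rule AE_I')
    show "{\<omega> \<in> space M. \<not> (\<exists>\<tau>>0. T < U \<tau> \<omega>)} \<subseteq> N"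
    proof (clarsimp simp: N_def not_less)
      fix \<omega> k assume "\<forall>\<tau>. \<tau> \<le> 0 \<or> U \<tau> \<omega> \<le> T"
      then have "1 + real k \<le> 0 \<or> U (1 + real k) \<omega> \<le> T" by blast
      then show "U (1 + real k) \<omega> \<le> T" by simp
    qed
  qed
qed

lemma inverse_subordinator_le:
  assumes "\<tau> > 0" "U \<tau> \<omega> > T"
  shows "inverse_subordinator U T \<omega> \<le> \<tau>"
  unfolding inverse_subordinator_def
  by (rule cInf_lower) (use assms in \<open>auto intro!: bdd_belowI[of _ 0]\<close>)

lemma subordinator_le_of_inverse_subordinator_gt:
  assumes sub: "subordinator M U \<psi>" and "\<omega> \<in> space M" "k \<ge> 0" "T \<ge> 0"
    and "inverse_subordinator U T \<omega> > k"
  shows "U k \<omega> \<le> T"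
proof (cases "k = 0")
  case True
  then show ?thesis using subordinator_path[OF sub \<open>\<omega> \<in> space M\<close>] \<open>T \<ge> 0\<close> by simp
next
  case False
  then show ?thesis
    using inverse_subordinator_le[where \<tau>=k and U=U and \<omega>=\<omega> and T=T] assms by fastforce
qed

lemma inverse_subordinator_pos:
  assumes sub: "subordinator M U \<psi>" and "T > 0" "\<omega> \<in> space M"
    and exceeds: "\<exists>\<tau>>0. U \<tau> \<omega> > T"
  shows "inverse_subordinator U T \<omega> > 0"
proof -
  from subordinator_path[OF sub \<open>\<omega> \<in> space M\<close>]
  have "U 0 \<omega> = 0" and "((\<lambda>s. U s \<omega>) \<longlongrightarrow> U 0 \<omega>) (at_right 0)"
    by (auto simp: continuous_within)
  then have "\<forall>\<^sub>F s in at_right 0. U s \<omega> < T"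
    using \<open>T > 0\<close> by (intro order_tendstoD(2)) auto
  then obtain b where b: "b > 0" "\<And>s. 0 < s \<Longrightarrow> s < b \<Longrightarrow> U s \<omega> < T"
    by (auto simp: eventually_at_right_field)
  have "b \<le> Inf {\<tau>. \<tau> > 0 \<and> U \<tau> \<omega> > T}"
  proof (rule cInf_greatest)
    show "{\<tau>. \<tau> > 0 \<and> U \<tau> \<omega> > T} \<noteq> {}" using exceeds by auto
    fix x assume "x \<in> {\<tau>. \<tau> > 0 \<and> U \<tau> \<omega> > T}"
    then show "b \<le> x" using b(2)[of x] by (cases "x < b") auto
  qed
  with b show ?thesis unfolding inverse_subordinator_def by simp
qed

text \<open>
  Inf {} is an unspecified real number; the second disjunct accounts for paths that never exceed T.
\<close>

lemma inverse_subordinator_less_iff: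
  assumes sub: "subordinator M U \<psi>" and "\<omega> \<in> space M"
  shows "inverse_subordinator U T \<omega> < a \<longleftrightarrow>
    (\<exists>q\<in>\<rat> \<inter> {0<..<a}. T < U q \<omega>) \<or> ((\<forall>q\<in>\<rat> \<inter> {0<..}. \<not> T < U q \<omega>) \<and> Inf ({} :: real set) < a)"
proof -
  define A where "A = {\<tau>. \<tau> > 0 \<and> U \<tau> \<omega> > T}"
  have S: "inverse_subordinator U T \<omega> = Inf A" by (simp add: inverse_subordinator_def A_def)
  have bdd: "bdd_below A" by (auto simp: A_def intro!: bdd_belowI[of _ 0])
  have rational_witness: "\<exists>q\<in>\<rat> \<inter> {0<..<b}. T < U q \<omega>" if "\<tau> \<in> A" "\<tau> < b" for \<tau> b
  proof -
    obtain q where q: "q \<in> \<rat>" "\<tau> < q" "q < b" using Rats_dense_in_real[OF \<open>\<tau> < b\<close>] by blast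
    have "U \<tau> \<omega> \<le> U q \<omega>"
      using that q by (intro subordinator_mono[OF sub \<open>\<omega> \<in> space M\<close>]) (auto simp: A_def)
    then show ?thesis using that q by (auto simp: A_def intro!: bexI[of _ q])
  qed
  show ?thesis
  proof (cases "A = {}")
    case True
    then have "\<forall>q\<in>\<rat> \<inter> {0<..}. \<not> T < U q \<omega>" by (auto simp: A_def)
    with True S show ?thesis by auto
  next
    case False
    then obtain \<tau> where "\<tau> \<in> A" by auto
    then have "\<exists>q\<in>\<rat> \<inter> {0<..}. T < U q \<omega>" using rational_witness[of \<tau> "\<tau> + 1"] by auto
    moreover have "Inf A < a \<longleftrightarrow> (\<exists>q\<in>\<rat> \<inter> {0<..<a}. T < U q \<omega>)"
    proof
      assume "Inf A < a"
      then obtain x where "x \<in> A" "x < a" using cInf_lessD[OF False] by blast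
      then show "\<exists>q\<in>\<rat> \<inter> {0<..<a}. T < U q \<omega>" by (rule rational_witness)
    next
      assume "\<exists>q\<in>\<rat> \<inter> {0<..<a}. T < U q \<omega>"
      then obtain q where "q \<in> A" "q < a" by (auto simp: A_def)
      then show "Inf A < a" using cInf_lower[OF _ bdd] by (meson order.strict_trans1)
    qed
    ultimately show ?thesis using S by auto
  qed
qed

lemma inverse_subordinator_measurable:
  assumes sub: "subordinator M U \<psi>"
  shows "inverse_subordinator U T \<in> borel_measurable M"
  unfolding borel_measurable_iff_less
proof
  fix a :: real
  have [measurable]: "U q \<in> borel_measurable M" if "q \<in> \<rat> \<inter> {0<..}" for q
    using that by (intro subordinator_measurable[OF sub]) auto
  have [measurable]: "U q \<in> borel_measurable M" if "q \<in> \<rat> \<inter> {0<..<a}" for q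
    using that by (intro subordinator_measurable[OF sub]) auto
  have "countable (\<rat> \<inter> {0<..<a})" "countable (\<rat> \<inter> {0<..})"
    by (simp_all add: countable_Int1 countable_rat)
  then have "{\<omega> \<in> space M. (\<exists>q\<in>\<rat> \<inter> {0<..<a}. T < U q \<omega>)
      \<or> ((\<forall>q\<in>\<rat> \<inter> {0<..}. \<not> T < U q \<omega>) \<and> Inf ({} :: real set) < a)} \<in> sets M"
    by measurable
  moreover have "{\<omega> \<in> space M. inverse_subordinator U T \<omega> < a} = {\<omega> \<in> space M. (\<exists>q\<in>\<rat> \<inter> {0<..<a}. T < U q \<omega>)
      \<or> ((\<forall>q\<in>\<rat> \<inter> {0<..}. \<not> T < U q \<omega>) \<and> Inf ({} :: real set) < a)}"
    using inverse_subordinator_less_iff[OF sub] by blast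
  ultimately show "{\<omega> \<in> space M. inverse_subordinator U T \<omega> < a} \<in> sets M" by simp
qed

lemma exp_inverse_subordinator_le_series:
  assumes sub: "subordinator M U \<psi>" and "\<omega> \<in> space M" "T > 0" "a \<ge> 0"
    and exceeds: "\<exists>\<tau>>0. U \<tau> \<omega> > T"
  shows "ennreal (exp (a * inverse_subordinator U T \<omega>))
    \<le> (\<Sum>k. ennreal (exp (a * (real k + 1))) * indicator {\<omega>\<in>space M. U (real k) \<omega> \<le> T} \<omega>)"
proof -
  define S where "S = inverse_subordinator U T \<omega>"
  have "S > 0" unfolding S_def using assms by (intro inverse_subordinator_pos[OF sub]) auto
  define k where "k = nat (\<lceil>S\<rceil> - 1)"
  have k: "real k < S" "S \<le> real k + 1"
    using \<open>S > 0\<close> unfolding k_def by (auto simp: of_nat_diff) linarith+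
  have "U (real k) \<omega> \<le> T"
    using k assms unfolding S_def by (intro subordinator_le_of_inverse_subordinator_gt[OF sub]) auto
  have "ennreal (exp (a * S)) \<le> ennreal (exp (a * (real k + 1)))"
    using k \<open>a \<ge> 0\<close> by (auto intro!: ennreal_leI mult_left_mono)
  also have "\<dots> = (\<Sum>i\<in>{k}. ennreal (exp (a * (real i + 1))) * indicator {\<omega>\<in>space M. U (real i) \<omega> \<le> T} \<omega>)"
    using \<open>U (real k) \<omega> \<le> T\<close> \<open>\<omega> \<in> space M\<close> by simp
  also have "\<dots> \<le> (\<Sum>i. ennreal (exp (a * (real i + 1))) * indicator {\<omega>\<in>space M. U (real i) \<omega> \<le> T} \<omega>)"
    by (rule sum_le_suminf[OF summableI]) auto
  finally show ?thesis unfolding S_def .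
qed

lemma integrable_exp_inverse_subordinator:
  assumes sub: "subordinator M U \<psi>" and "T > 0" "a \<ge> 0" "u \<ge> 0" and \<psi>: "\<psi> u \<ge> a + 1"
  shows "integrable M (\<lambda>\<omega>. exp (a * inverse_subordinator U T \<omega>))"
proof -
  interpret prob_space M using sub by (rule subordinator_prob_space)
  have [measurable]: "inverse_subordinator U T \<in> borel_measurable M"
    using sub by (rule inverse_subordinator_measurable)
  have [measurable]: "U (real k) \<in> borel_measurable M" for k :: nat
    using sub by (rule subordinator_measurable) simp
  define B where "B k = {\<omega>\<in>space M. U (real k) \<omega> \<le> T}" for k :: nat
  have [measurable]: "B k \<in> sets M" for k unfolding B_def by measurable
  define g where "g k = exp (a + u * T) * exp (a - \<psi> u) ^ k" for k :: nat
  have "summable g"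
    unfolding g_def using \<psi> by (intro summable_mult summable_geometric) simp
  have term_le: "ennreal (exp (a * (real k + 1))) * emeasure M (B k) \<le> ennreal (g k)" for k
  proof -
    have "exp (a * (real k + 1)) * measure M (B k) \<le> exp (a * (real k + 1)) * (exp (u * T) * exp (- real k * \<psi> u))"
      unfolding B_def using sub _ \<open>u \<ge> 0\<close> by (intro mult_left_mono subordinator_prob_le) auto
    also have "\<dots> = g k"
      by (simp add: g_def exp_of_nat_mult[symmetric] exp_add[symmetric] algebra_simps)
    finally show ?thesis
      by (simp add: emeasure_eq_measure ennreal_mult[symmetric] ennreal_leI)
  qed
  have "AE \<omega> in M. \<exists>\<tau>>0. U \<tau> \<omega> > T"
    using \<psi> \<open>a \<ge> 0\<close> by (intro AE_subordinator_exceeds[OF sub \<open>u \<ge> 0\<close>]) auto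
  then have "AE \<omega> in M. ennreal (norm (exp (a * inverse_subordinator U T \<omega>)))
      \<le> (\<Sum>k. ennreal (exp (a * (real k + 1))) * indicator (B k) \<omega>)"
    using AE_space
    by eventually_elim (use assms in \<open>simp add: B_def exp_inverse_subordinator_le_series[OF sub]\<close>)
  then have "(\<integral>\<^sup>+ \<omega>. ennreal (norm (exp (a * inverse_subordinator U T \<omega>))) \<partial>M)
      \<le> (\<integral>\<^sup>+ \<omega>. (\<Sum>k. ennreal (exp (a * (real k + 1))) * indicator (B k) \<omega>) \<partial>M)"
    by (rule nn_integral_mono_AE)
  also have "\<dots> = (\<Sum>k. ennreal (exp (a * (real k + 1))) * emeasure M (B k))"
    by (simp add: nn_integral_suminf nn_integral_cmult_indicator)
  also have "\<dots> \<le> (\<Sum>k. ennreal (g k))"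
    by (intro suminf_le summableI term_le)
  also have "\<dots> = ennreal (\<Sum>k. g k)"
    using \<open>summable g\<close> \<psi> by (intro suminf_ennreal2) (auto simp: g_def)
  also have "\<dots> < \<infinity>" by simp
  finally show ?thesis by (intro integrableI_bounded) auto
qed

section \<open>Convergence of the subordinated prices\<close>

text \<open>
  f is only known to be continuous on [0, infinity), but every node price is positive,
  so f may be replaced by the continuous function f o max 0.
\<close>

lemma measurable_crr_price:
  assumes "continuous_on {0..} f" "Z0 > 0"
  shows "(\<lambda>\<tau>. crr_price r \<sigma> Z0 f n \<tau>) \<in> borel_measurable borel"
proof -
  have "continuous_on UNIV (\<lambda>x::real. f (max 0 x))"
    by (rule continuous_on_compose2[OF assms(1)]) (auto intro!: continuous_intros)
  then have [measurable]: "(\<lambda>x. f (max 0 x)) \<in> borel_measurable borel"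
    by (rule borel_measurable_continuous_onI)
  have "(\<lambda>\<tau>. crr_price r \<sigma> Z0 f n \<tau>) = (\<lambda>\<tau>. crr_price r \<sigma> Z0 (\<lambda>x. f (max 0 x)) n \<tau>)"
    unfolding crr_price_def Let_def using \<open>Z0 > 0\<close> by (intro ext arg_cong2[where f="(*)"] refl sum.cong) auto
  also have "\<dots> \<in> borel_measurable borel"
    unfolding crr_price_def Let_def by measurable
  finally show ?thesis .
qed

lemma measurable_bs_price:
  assumes "continuous_on {0..} f" "Z0 > 0"
  shows "(\<lambda>\<tau>. bs_price r \<sigma> Z0 f \<tau>) \<in> borel_measurable borel"
proof -
  have "continuous_on UNIV (\<lambda>x::real. f (max 0 x))"
    by (rule continuous_on_compose2[OF assms(1)]) (auto intro!: continuous_intros)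
  then have [measurable]: "(\<lambda>x. f (max 0 x)) \<in> borel_measurable borel"
    by (rule borel_measurable_continuous_onI)
  interpret N: prob_space std_normal_distribution
    using real_dist_normal_dist by (simp add: real_distribution_def)
  have [measurable_cong]: "sets std_normal_distribution = sets borel" by simp
  have "(\<lambda>\<tau>. bs_price r \<sigma> Z0 f \<tau>) = (\<lambda>\<tau>. bs_price r \<sigma> Z0 (\<lambda>x. f (max 0 x)) \<tau>)"
    unfolding bs_price_def using \<open>Z0 > 0\<close>
    by (intro ext arg_cong2[where f="(*)"] refl Bochner_Integration.integral_cong) auto
  also have "\<dots> \<in> borel_measurable borel"
    unfolding bs_price_def by measurable
  finally show ?thesis .
qed

lemma expectation_crr_price_tendsto_at_random_horizon:
  fixes f :: "real \<Rightarrow> real" and S :: "'a \<Rightarrow> real"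
  assumes "prob_space M" and [measurable]: "S \<in> borel_measurable M"
    and S_pos: "AE \<omega> in M. S \<omega> > 0"
    and S_exp: "integrable M (\<lambda>\<omega>. exp (r ^ 3 / \<sigma> ^ 4 * S \<omega>))"
    and "Z0 > 0" "r \<ge> 0" "\<sigma> > 0" "continuous_on {0..} f"
    and "\<forall>x\<ge>0. f x \<ge> 0" and "\<forall>x\<ge>0. f x \<le> c * \<bar>x\<bar>"
  shows "(\<lambda>n. prob_space.expectation M (\<lambda>\<omega>. crr_price r \<sigma> Z0 f n (S \<omega>)))
    \<longlonglongrightarrow> prob_space.expectation M (\<lambda>\<omega>. bs_price r \<sigma> Z0 f (S \<omega>))"
proof -
  interpret prob_space M by fact
  have [measurable]: "(\<lambda>\<tau>. crr_price r \<sigma> Z0 f n \<tau>) \<in> borel_measurable borel" for n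
    using assms(8,5) by (rule measurable_crr_price)
  have [measurable]: "(\<lambda>\<tau>. bs_price r \<sigma> Z0 f \<tau>) \<in> borel_measurable borel"
    using assms(8,5) by (rule measurable_bs_price)
  have "(\<lambda>n. expectation (\<lambda>\<omega>. crr_price r \<sigma> Z0 f (Suc n) (S \<omega>)))
      \<longlonglongrightarrow> expectation (\<lambda>\<omega>. bs_price r \<sigma> Z0 f (S \<omega>))"
  proof (rule integral_dominated_convergence[OF _ _ integrable_mult_right[OF S_exp, of "c * Z0"]])
    show "(\<lambda>\<omega>. bs_price r \<sigma> Z0 f (S \<omega>)) \<in> borel_measurable M"
      and "(\<lambda>\<omega>. crr_price r \<sigma> Z0 f (Suc n) (S \<omega>)) \<in> borel_measurable M" for n
      by measurable
    show "AE \<omega> in M. (\<lambda>n. crr_price r \<sigma> Z0 f (Suc n) (S \<omega>)) \<longlonglongrightarrow> bs_price r \<sigma> Z0 f (S \<omega>)"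
      using S_pos by eventually_elim (intro LIMSEQ_Suc crr_price_tendsto_bs_price[where c=c] assms(5-10))
    show "AE \<omega> in M. norm (crr_price r \<sigma> Z0 f (Suc n) (S \<omega>)) \<le> c * Z0 * exp (r ^ 3 / \<sigma> ^ 4 * S \<omega>)" for n
      using S_pos
    proof eventually_elim
      case (elim \<omega>)
      then show ?case unfolding real_norm_def
        by (rule crr_price_bound[OF _ _ assms(6,7,5,9,10)]) simp_all
    qed
  qed
  then show ?thesis by (rule LIMSEQ_imp_Suc)
qed

theorem theorem3:
  fixes M :: "'a measure" and U :: "real \<Rightarrow> 'a \<Rightarrow> real" and \<nu> :: "real measure"
    and f :: "real \<Rightarrow> real" and T Z0 r \<sigma> c :: real
  assumes "levy_measure \<nu>"
    and "subordinator M U (laplace_exponent \<nu>)"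
    and "T > 0" and "Z0 > 0" and "r \<ge> 0" and "\<sigma> > 0"
    and "continuous_on {0..} f"
    and "\<forall>x\<ge>0. f x \<ge> 0"
    and "c > 0" and "\<forall>x\<ge>0. f x \<le> c * \<bar>x\<bar>"
  shows "(\<lambda>n. prob_space.expectation M
              (\<lambda>\<omega>. crr_price r \<sigma> Z0 f n (inverse_subordinator U T \<omega>)))
         \<longlonglongrightarrow> prob_space.expectation M
              (\<lambda>\<omega>. bs_price r \<sigma> Z0 f (inverse_subordinator U T \<omega>))"
proof (rule expectation_crr_price_tendsto_at_random_horizon)
  note sub = assms(2)
  define a where "a = r ^ 3 / \<sigma> ^ 4"
  have "a \<ge> 0" using assms by (simp add: a_def)
  obtain u where "u \<ge> 0" and \<psi>: "a + 1 \<le> laplace_exponent \<nu> u"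
    by (rule laplace_exponent_unbounded[OF assms(1)])
  show "integrable M (\<lambda>\<omega>. exp (r ^ 3 / \<sigma> ^ 4 * inverse_subordinator U T \<omega>))"
    unfolding a_def[symmetric] using sub assms(3) \<open>a \<ge> 0\<close> \<open>u \<ge> 0\<close> \<psi>
    by (rule integrable_exp_inverse_subordinator)
  have "AE \<omega> in M. \<exists>\<tau>>0. U \<tau> \<omega> > T"
    using \<psi> \<open>a \<ge> 0\<close> by (intro AE_subordinator_exceeds[OF sub \<open>u \<ge> 0\<close>]) auto
  with AE_space
  show "AE \<omega> in M. inverse_subordinator U T \<omega> > 0"
    by eventually_elim (auto intro: inverse_subordinator_pos[OF sub assms(3)])
  show "prob_space M" using sub by (rule subordinator_prob_space)
  show "inverse_subordinator U T \<in> borel_measurable M"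
    using sub by (rule inverse_subordinator_measurable)
qed (use assms in auto)

end
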